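(* Let $\mathbb V$ be the 2-vector space of a 2-term complex $V_1\xrightarrow{\mathrm d}V_0$ and $L$ a Dirac structure of the omni-Lie 2-algebra $\mathfrak{gl}(\mathbb V)\oplus\mathbb V$. Then the normalizer $N_L$ is a sub-Lie 2-algebra of $\mathfrak{gl}(\mathbb V)$, i.e. it is a 2-sub-vector space (in particular $\delta(N_L\cap\mathrm{End}^1(\mathbb V))\subset N_L$) closed under the bracket of $\mathfrak{gl}(\mathbb V)$.
   Context: All vector spaces are finite-dimensional over $\mathbb R$. A 2-sub-vector space has subspaces of objects and morphisms with restricted structure maps; a sub-Lie 2-algebra is a 2-sub-vector space closed under the bracket. For a 2-term complex $V_1\xrightarrow{\mathrm d}V_0$, $\mathbb V$ has objects $V_0$, morphisms $V_0\oplus V_1$ ($u+m$), $s(u+m)=u$, $t(u+m)=u+\mathrm dm$. Let $\mathrm{End}^0_{\mathrm d}(\mathbb V)=\{A=(A_0,A_1):A_0\mathrm d=\mathrm dA_1\}$, $\mathrm{End}^1(\mathbb V)=\mathrm{Hom}(V_0,V_1)$, $\delta\phi=(\mathrm d\phi,\phi\mathrm d)$; brackets $[A,B]$ componentwise commutator, $[A,\phi]=-[\phi,A]=A_1\phi-\phi A_0$, $[\phi,\psi]_\delta=\phi\mathrm d\psi-\psi\mathrm d\phi$. The strict Lie 2-algebra $\mathfrak{gl}(\mathbb V)$ has objects $\mathrm{End}^0_{\mathrm d}(\mathbb V)$, morphisms $A+\phi$ ($\phi\in\mathrm{End}^1(\mathbb V)$ identified with the morphism $0+\phi$), $s(A+\phi)=A$,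 $t(A+\phi)=A+\delta\phi$, bracket $[A+\phi,B+\psi]=[A,B]+[\phi,\psi]_\delta+[A,\psi]+[\phi,B]$, and acts on $\mathbb V$ by $A(u)=A_0u$, $(A+\phi)(u+m)=A_0u+(A_1m+\phi(u+\mathrm dm))$. The omni-Lie 2-algebra is $\mathfrak{gl}(\mathbb V)\oplus\mathbb V$ with pairing $\langle A+\phi+u+m,B+\psi+v+n\rangle=\tfrac12((A+\phi)(v+n)+(B+\psi)(u+m))$ and bracket $[\![A+\phi+u+m,B+\psi+v+n]\!]=[A+\phi,B+\psi]+\tfrac12((A+\phi)(v+n)-(B+\psi)(u+m))$ (similar formulas on objects), and $\{e_1,e_2\}=[\![e_1,e_2]\!]+\langle e_1,e_2\rangle$, i.e. $\{A+\phi+u+m,B+\psi+v+n\}=[A+\phi,B+\psi]+(A+\phi)(v+n)$. $L^\perp=\{e:\langle e,l\rangle=0\ \forall l\in L\}$; a Dirac structure is a 2-sub-vector space $L=L^\perp$ closed under $[\![\cdot,\cdot]\!]$. The normalizer of $K\subset\mathfrak{gl}(\mathbb V)\oplus\mathbb V$ is $N_K=\{N\in\mathfrak{gl}(\mathbb V):\{N,k\}\in K\ \forall k\in K\}$ (levelwise). *)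

theory Defs
  imports "HOL-Analysis.Analysis"
begin

text \<open>V0 = real^'n, V1 = real^'m (finite-dimensional real vector spaces);
linear maps are represented by matrices. The differential d : V1 -> V0 is
d :: real^'m^'n. A degree-0 endomorphism is a pair (A0, A1) with
A0 :: real^'n^'n, A1 :: real^'m^'m; a degree-1 map phi : V0 -> V1 is
phi :: real^'n^'m.\<close>

type_synonym ('n,'m) end0 = "(real^'n^'n) \<times> (real^'m^'m)"
type_synonym ('n,'m) end1 = "real^'n^'m"
type_synonym ('n,'m) glmor = "('n,'m) end0 \<times> ('n,'m) end1"
type_synonym ('n,'m) vmor = "(real^'n) \<times> (real^'m)"
type_synonym ('n,'m) omniob = "('n,'m) end0 \<times> (real^'n)"
type_synonym ('n,'m) omnimor = "('n,'m) glmor \<times> ('n,'m) vmor"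

text \<open>Ob, Mor: spaces of objects and morphisms; s, t source and target, i identity,
cmp g f = composite "g after f" (defined when t f = s g).\<close>
definition two_sub_vector_space ::
  "'o::real_vector set \<Rightarrow> 'a::real_vector set \<Rightarrow> ('a \<Rightarrow> 'o) \<Rightarrow> ('a \<Rightarrow> 'o) \<Rightarrow> ('o \<Rightarrow> 'a)
   \<Rightarrow> ('a \<Rightarrow> 'a \<Rightarrow> 'a) \<Rightarrow> 'o set \<Rightarrow> 'a set \<Rightarrow> bool" where
  "two_sub_vector_space Ob Mor s t i cmp C0 C1 \<longleftrightarrow>
     C0 \<subseteq> Ob \<and> subspace C0 \<and> C1 \<subseteq> Mor \<and> subspace C1 \<and>
     s ` C1 \<subseteq> C0 \<and> t ` C1 \<subseteq> C0 \<and> i ` C0 \<subseteq> C1 \<and>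
     (\<forall>f\<in>C1. \<forall>g\<in>C1. t f = s g \<longrightarrow> cmp g f \<in> C1)"

definition End0 :: "real^'m^'n \<Rightarrow> ('n::finite,'m::finite) end0 set" where
  "End0 d = {(A0, A1). A0 ** d = d ** A1}"

definition delta :: "real^'m^'n \<Rightarrow> ('n::finite,'m::finite) end1 \<Rightarrow> ('n::finite,'m::finite) end0" where
  "delta d phi = (d ** phi, phi ** d)"

definition br0 :: "('n::finite,'m::finite) end0 \<Rightarrow> ('n::finite,'m::finite) end0 \<Rightarrow> ('n::finite,'m::finite) end0" where
  "br0 A B = (fst A ** fst B - fst B ** fst A, snd A ** snd B - snd B ** snd A)"

definition br01 :: "('n::finite,'m::finite) end0 \<Rightarrow> ('n::finite,'m::finite) end1 \<Rightarrow> ('n::finite,'m::finite) end1" where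
  "br01 A phi = snd A ** phi - phi ** fst A"

definition br11 :: "real^'m^'n \<Rightarrow> ('n::finite,'m::finite) end1 \<Rightarrow> ('n::finite,'m::finite) end1 \<Rightarrow> ('n::finite,'m::finite) end1" where
  "br11 d phi psi = phi ** d ** psi - psi ** d ** phi"

text \<open>[A+phi, B+psi] = [A,B] + [phi,psi]_delta + [A,psi] + [phi,B], with [phi,B] = -[B,phi]\<close>
definition br1 :: "real^'m^'n \<Rightarrow> ('n::finite,'m::finite) glmor \<Rightarrow> ('n::finite,'m::finite) glmor \<Rightarrow> ('n::finite,'m::finite) glmor" where
  "br1 d X Y = (br0 (fst X) (fst Y),
                br11 d (snd X) (snd Y) + br01 (fst X) (snd Y) - br01 (fst Y) (snd X))"

definition gl_s :: "('n::finite,'m::finite) glmor \<Rightarrow> ('n::finite,'m::finite) end0" where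
  "gl_s X = fst X"
definition gl_t :: "real^'m^'n \<Rightarrow> ('n::finite,'m::finite) glmor \<Rightarrow> ('n::finite,'m::finite) end0" where
  "gl_t d X = fst X + delta d (snd X)"
definition gl_i :: "('n::finite,'m::finite) end0 \<Rightarrow> ('n::finite,'m::finite) glmor" where
  "gl_i A = (A, 0)"
definition gl_comp :: "('n::finite,'m::finite) glmor \<Rightarrow> ('n::finite,'m::finite) glmor \<Rightarrow> ('n::finite,'m::finite) glmor" where
  "gl_comp Y X = (fst X, snd X + snd Y)"

definition act0 :: "('n::finite,'m::finite) end0 \<Rightarrow> real^'n \<Rightarrow> real^'n" where
  "act0 A u = fst A *v u"

definition act1 :: "real^'m^'n \<Rightarrow> ('n::finite,'m::finite) glmor \<Rightarrow> ('n::finite,'m::finite) vmor \<Rightarrow> ('n::finite,'m::finite) vmor" where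
  "act1 d X x = (fst (fst X) *v fst x,
                 snd (fst X) *v snd x + snd X *v (fst x + d *v snd x))"

definition omni_ob :: "real^'m^'n \<Rightarrow> ('n::finite,'m::finite) omniob set" where
  "omni_ob d = End0 d \<times> UNIV"
definition omni_mor :: "real^'m^'n \<Rightarrow> ('n::finite,'m::finite) omnimor set" where
  "omni_mor d = (End0 d \<times> UNIV) \<times> UNIV"

definition omni_s :: "('n::finite,'m::finite) omnimor \<Rightarrow> ('n::finite,'m::finite) omniob" where
  "omni_s e = (fst (fst e), fst (snd e))"
definition omni_t :: "real^'m^'n \<Rightarrow> ('n::finite,'m::finite) omnimor \<Rightarrow> ('n::finite,'m::finite) omniob" where
  "omni_t d e = (fst (fst e) + delta d (snd (fst e)), fst (snd e) + d *v snd (snd e))"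
definition omni_i :: "('n::finite,'m::finite) omniob \<Rightarrow> ('n::finite,'m::finite) omnimor" where
  "omni_i a = ((fst a, 0), (snd a, 0))"
text \<open>composite of e : a -> b followed by f : b -> c\<close>
definition omni_comp :: "('n::finite,'m::finite) omnimor \<Rightarrow> ('n::finite,'m::finite) omnimor \<Rightarrow> ('n::finite,'m::finite) omnimor" where
  "omni_comp f e = ((fst (fst e), snd (fst e) + snd (fst f)),
                    (fst (snd e), snd (snd e) + snd (snd f)))"

definition pair0 :: "('n::finite,'m::finite) omniob \<Rightarrow> ('n::finite,'m::finite) omniob \<Rightarrow> real^'n" where
  "pair0 a b = (1/2) *\<^sub>R (act0 (fst a) (snd b) + act0 (fst b) (snd a))"
definition pair1 :: "real^'m^'n \<Rightarrow> ('n::finite,'m::finite) omnimor \<Rightarrow> ('n::finite,'m::finite) omnimor \<Rightarrow> ('n::finite,'m::finite) vmor" where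
  "pair1 d e f = (1/2) *\<^sub>R (act1 d (fst e) (snd f) + act1 d (fst f) (snd e))"

definition dbr0 :: "('n::finite,'m::finite) omniob \<Rightarrow> ('n::finite,'m::finite) omniob \<Rightarrow> ('n::finite,'m::finite) omniob" where
  "dbr0 a b = (br0 (fst a) (fst b), (1/2) *\<^sub>R (act0 (fst a) (snd b) - act0 (fst b) (snd a)))"
definition dbr1 :: "real^'m^'n \<Rightarrow> ('n::finite,'m::finite) omnimor \<Rightarrow> ('n::finite,'m::finite) omnimor \<Rightarrow> ('n::finite,'m::finite) omnimor" where
  "dbr1 d e f = (br1 d (fst e) (fst f), (1/2) *\<^sub>R (act1 d (fst e) (snd f) - act1 d (fst f) (snd e)))"

text \<open>{e1,e2} = [[e1,e2]] + <e1,e2>\<close>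
definition cbr0 :: "('n::finite,'m::finite) omniob \<Rightarrow> ('n::finite,'m::finite) omniob \<Rightarrow> ('n::finite,'m::finite) omniob" where
  "cbr0 a b = (br0 (fst a) (fst b), act0 (fst a) (snd b))"
definition cbr1 :: "real^'m^'n \<Rightarrow> ('n::finite,'m::finite) omnimor \<Rightarrow> ('n::finite,'m::finite) omnimor \<Rightarrow> ('n::finite,'m::finite) omnimor" where
  "cbr1 d e f = (br1 d (fst e) (fst f), act1 d (fst e) (snd f))"

definition perp0 :: "real^'m^'n \<Rightarrow> ('n::finite,'m::finite) omniob set \<Rightarrow> ('n::finite,'m::finite) omniob set" where
  "perp0 d L0 = {e \<in> omni_ob d. \<forall>l\<in>L0. pair0 e l = 0}"
definition perp1 :: "real^'m^'n \<Rightarrow> ('n::finite,'m::finite) omnimor set \<Rightarrow> ('n::finite,'m::finite) omnimor set" where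
  "perp1 d L1 = {e \<in> omni_mor d. \<forall>l\<in>L1. pair1 d e l = 0}"

definition dirac :: "real^'m^'n \<Rightarrow> ('n::finite,'m::finite) omniob set \<Rightarrow> ('n::finite,'m::finite) omnimor set \<Rightarrow> bool" where
  "dirac d L0 L1 \<longleftrightarrow>
     two_sub_vector_space (omni_ob d) (omni_mor d) omni_s (omni_t d) omni_i omni_comp L0 L1 \<and>
     L0 = perp0 d L0 \<and> L1 = perp1 d L1 \<and>
     (\<forall>a\<in>L0. \<forall>b\<in>L0. dbr0 a b \<in> L0) \<and>
     (\<forall>e\<in>L1. \<forall>f\<in>L1. dbr1 d e f \<in> L1)"

definition normalizer0 :: "real^'m^'n \<Rightarrow> ('n::finite,'m::finite) omniob set \<Rightarrow> ('n::finite,'m::finite) end0 set" where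
  "normalizer0 d L0 = {N \<in> End0 d. \<forall>k\<in>L0. cbr0 (N, 0) k \<in> L0}"
definition normalizer1 :: "real^'m^'n \<Rightarrow> ('n::finite,'m::finite) omnimor set \<Rightarrow> ('n::finite,'m::finite) glmor set" where
  "normalizer1 d L1 = {N \<in> End0 d \<times> UNIV. \<forall>k\<in>L1. cbr1 d (N, 0) k \<in> L1}"

definition sub_lie2_gl :: "real^'m^'n \<Rightarrow> ('n::finite,'m::finite) end0 set \<Rightarrow> ('n::finite,'m::finite) glmor set \<Rightarrow> bool" where
  "sub_lie2_gl d N0 N1 \<longleftrightarrow>
     two_sub_vector_space (End0 d) (End0 d \<times> UNIV) gl_s (gl_t d) gl_i gl_comp N0 N1 \<and>
     (\<forall>A\<in>N0. \<forall>B\<in>N0. br0 A B \<in> N0) \<and>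
     (\<forall>X\<in>N1. \<forall>Y\<in>N1. br1 d X Y \<in> N1)"

end

theory Submission
  imports Defs
begin

(*
  Write {N, -} for the action of N in gl(V) on gl(V) + V, so that N_L is the
  stabilizer of L under this action.  The stabilizer of a subspace under an action that is
  linear in N is a subspace, and it is closed under the bracket as soon as the action is a
  Lie algebra representation; both facts are proved once for abstract stabilizers.  That
  {N, -} is a representation reduces to the Jacobi identity of gl(V) and to gl(V) acting on V
  by a representation, which are matrix identities.  The remaining conditions of a
  2-sub-vector space are checked one by one: source and target because the action commutes
  with the structure maps of L; identities because the pairing satisfies an invariance
  identity and L = L^perp (this is where the Dirac condition enters); composition because in a
  strict 2-vector space it is an affine combination of morphisms and identities.  The claim
  about delta is the target condition for morphisms with source 0.
*)

lemma matrix_add_rdistrib: "((A::real^'n^'m) + B) ** (C::real^'p^'n) = A ** C + B ** C"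
  by (vector matrix_matrix_mult_def sum.distrib[symmetric] field_simps)

lemma matrix_diff_rdistrib: "((A::real^'n^'m) - B) ** (C::real^'p^'n) = A ** C - B ** C"
  by (vector matrix_matrix_mult_def sum_subtractf[symmetric] field_simps)

lemma matrix_diff_ldistrib: "(A::real^'n^'m) ** ((B::real^'p^'n) - C) = A ** B - A ** C"
  by (vector matrix_matrix_mult_def sum_subtractf[symmetric] field_simps)

lemma matrix_scaleR_left: "(c *\<^sub>R (A::real^'n^'m)) ** (B::real^'p^'n) = c *\<^sub>R (A ** B)"
  by (simp add: scalar_matrix_assoc)

lemma matrix_scaleR_right: "(A::real^'n^'m) ** (c *\<^sub>R (B::real^'p^'n)) = c *\<^sub>R (A ** B)"
  by (simp add: matrix_scalar_ac scalar_matrix_assoc)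

lemmas matrix_simps = matrix_add_rdistrib matrix_diff_rdistrib matrix_diff_ldistrib
  matrix_add_ldistrib matrix_mul_assoc[symmetric] matrix_vector_mul_assoc
  matrix_scaleR_left matrix_scaleR_right scaleR_matrix_vector_assoc matrix_vector_mult_scaleR

text \<open>The intertwining relation A0 d = d A1, in the form needed to rewrite products that
  are right-associated by matrix_simps.\<close>

lemma End0_commute:
  assumes "(A0, A1) \<in> End0 d"
  shows "A0 ** (d ** W) = d ** (A1 ** W)"
  using assms by (auto simp: End0_def matrix_mul_assoc)

lemma End0_subspace: "subspace (End0 d)"
  unfolding subspace_def End0_def
  by (auto simp: matrix_simps zero_prod_def)

lemma End0_Times_subspace: "subspace (End0 d \<times> UNIV)"
  using End0_subspace[of d] unfolding subspace_def by (auto simp: zero_prod_def)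

lemma delta_End0: "delta d phi \<in> End0 d"
  by (simp add: delta_def End0_def matrix_mul_assoc)

lemma br0_End0:
  assumes "A \<in> End0 d" "B \<in> End0 d"
  shows "br0 A B \<in> End0 d"
proof -
  obtain A0 A1 B0 B1 where AB: "A = (A0, A1)" "B = (B0, B1)" by fastforce
  show ?thesis
    using assms by (simp add: AB br0_def End0_def matrix_simps End0_commute)
qed

lemma br0_Jacobi: "br0 (br0 A B) C = br0 A (br0 B C) - br0 B (br0 A C)"
  unfolding br0_def by (simp add: matrix_simps algebra_simps)

lemma br1_Jacobi:
  assumes "fst X \<in> End0 d" "fst Y \<in> End0 d" "fst Z \<in> End0 d"
  shows "br1 d (br1 d X Y) Z = br1 d X (br1 d Y Z) - br1 d Y (br1 d X Z)"
proof -
  obtain A0 A1 phi B0 B1 psi C0 C1 chi where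
    XYZ: "X = ((A0, A1), phi)" "Y = ((B0, B1), psi)" "Z = ((C0, C1), chi)"
    by (metis prod.collapse)
  show ?thesis
    using assms unfolding XYZ br1_def br0_def br01_def br11_def
    by (simp add: matrix_simps End0_commute algebra_simps)
qed

lemma act0_br0: "act0 (br0 A B) u = act0 A (act0 B u) - act0 B (act0 A u)"
  unfolding br0_def act0_def by (simp add: matrix_simps algebra_simps)

lemma act1_br1:
  assumes "fst X \<in> End0 d" "fst Y \<in> End0 d"
  shows "act1 d (br1 d X Y) x = act1 d X (act1 d Y x) - act1 d Y (act1 d X x)"
proof -
  obtain A0 A1 phi B0 B1 psi where XY: "X = ((A0, A1), phi)" "Y = ((B0, B1), psi)"
    by (metis prod.collapse)
  show ?thesis
    using assms unfolding XY br1_def br0_def br01_def br11_def act1_def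
    by (simp add: End0_def matrix_simps End0_commute algebra_simps)
qed

lemma cbr0_linear:
  "cbr0 (A + B, 0) k = cbr0 (A, 0) k + cbr0 (B, 0) k"
  "cbr0 (c *\<^sub>R A, 0) k = c *\<^sub>R cbr0 (A, 0) k"
  by (simp_all add: cbr0_def br0_def act0_def prod_eq_iff matrix_simps algebra_simps)

lemma cbr1_linear:
  "cbr1 d (X + Y, 0) k = cbr1 d (X, 0) k + cbr1 d (Y, 0) k"
  "cbr1 d (c *\<^sub>R X, 0) k = c *\<^sub>R cbr1 d (X, 0) k"
  by (simp_all add: cbr1_def br1_def br0_def br01_def br11_def act1_def prod_eq_iff
      matrix_simps algebra_simps)

lemma cbr0_br0:
  "cbr0 (br0 A B, 0) k = cbr0 (A, 0) (cbr0 (B, 0) k) - cbr0 (B, 0) (cbr0 (A, 0) k)"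
  by (simp add: cbr0_def prod_eq_iff br0_Jacobi act0_br0)

lemma cbr1_br1:
  assumes "fst X \<in> End0 d" "fst Y \<in> End0 d" "k \<in> omni_mor d"
  shows "cbr1 d (br1 d X Y, 0) k = cbr1 d (X, 0) (cbr1 d (Y, 0) k) - cbr1 d (Y, 0) (cbr1 d (X, 0) k)"
  using assms by (auto simp: omni_mor_def cbr1_def prod_eq_iff br1_Jacobi act1_br1)

definition stabilizer :: "'e set \<Rightarrow> ('e \<Rightarrow> 'v \<Rightarrow> 'v) \<Rightarrow> 'v set \<Rightarrow> 'e set" where
  "stabilizer E rho L = {N \<in> E. \<forall>k\<in>L. rho N k \<in> L}"

lemma stabilizer_subspace:
  fixes rho :: "'e::real_vector \<Rightarrow> 'v::real_vector \<Rightarrow> 'v"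
  assumes E: "subspace E" and L: "subspace L"
    and add: "\<And>M N k. rho (M + N) k = rho M k + rho N k"
    and scale: "\<And>c N k. rho (c *\<^sub>R N) k = c *\<^sub>R rho N k"
  shows "subspace (stabilizer E rho L)"
proof -
  have "rho 0 k = 0" for k
    using scale[of 0 0 k] by simp
  then show ?thesis
    using subspace_0[OF E] subspace_0[OF L] subspace_add[OF E] subspace_add[OF L]
      subspace_scale[OF E] subspace_scale[OF L]
    unfolding subspace_def stabilizer_def by (auto simp: add scale)
qed

lemma stabilizer_bracket:
  fixes rho :: "'e \<Rightarrow> 'v::real_vector \<Rightarrow> 'v"
  assumes L: "subspace L" "L \<subseteq> M"
    and closed: "\<And>A B. A \<in> E \<Longrightarrow> B \<in> E \<Longrightarrow> br A B \<in> E"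
    and rep: "\<And>A B k. A \<in> E \<Longrightarrow> B \<in> E \<Longrightarrow> k \<in> M \<Longrightarrow>
                rho (br A B) k = rho A (rho B k) - rho B (rho A k)"
    and AB: "A \<in> stabilizer E rho L" "B \<in> stabilizer E rho L"
  shows "br A B \<in> stabilizer E rho L"
  using AB L closed rep subspace_diff[OF L(1)] unfolding stabilizer_def by auto

lemma normalizer0_stabilizer:
  "normalizer0 d L0 = stabilizer (End0 d) (\<lambda>A. cbr0 (A, 0)) L0"
  by (simp add: normalizer0_def stabilizer_def)

lemma normalizer1_stabilizer:
  "normalizer1 d L1 = stabilizer (End0 d \<times> UNIV) (\<lambda>X. cbr1 d (X, 0)) L1"
  by (simp add: normalizer1_def stabilizer_def)

lemma normalizer0_subspace:
  assumes "subspace L0"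
  shows "subspace (normalizer0 d L0)"
  unfolding normalizer0_stabilizer
  by (rule stabilizer_subspace[OF End0_subspace assms cbr0_linear])

lemma normalizer1_subspace:
  assumes "subspace L1"
  shows "subspace (normalizer1 d L1)"
  unfolding normalizer1_stabilizer
  by (rule stabilizer_subspace[OF End0_Times_subspace assms cbr1_linear])

lemma normalizer0_br0:
  assumes "subspace L0" "A \<in> normalizer0 d L0" "B \<in> normalizer0 d L0"
  shows "br0 A B \<in> normalizer0 d L0"
  using stabilizer_bracket[OF assms(1) subset_UNIV br0_End0 cbr0_br0] assms(2,3)
  unfolding normalizer0_stabilizer by blast

lemma normalizer1_br1:
  assumes "subspace L1" "L1 \<subseteq> omni_mor d" "X \<in> normalizer1 d L1" "Y \<in> normalizer1 d L1"
  shows "br1 d X Y \<in> normalizer1 d L1"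
  using assms(3,4) unfolding normalizer1_stabilizer
proof (rule stabilizer_bracket[OF assms(1,2), rotated 2])
  show "br1 d X Y \<in> End0 d \<times> UNIV" if "X \<in> End0 d \<times> UNIV" "Y \<in> End0 d \<times> UNIV" for X Y
    using that by (auto simp: br1_def mem_Times_iff intro: br0_End0)
  show "cbr1 d (br1 d X Y, 0) k = cbr1 d (X, 0) (cbr1 d (Y, 0) k) - cbr1 d (Y, 0) (cbr1 d (X, 0) k)"
    if "X \<in> End0 d \<times> UNIV" "Y \<in> End0 d \<times> UNIV" "k \<in> omni_mor d" for X Y k
    using that by (intro cbr1_br1) (auto simp: mem_Times_iff)
qed

lemma two_sub_vector_spaceD:
  assumes "two_sub_vector_space Ob Mor s t i cmp C0 C1"
  shows "subspace C0" "subspace C1" "C0 \<subseteq> Ob" "C1 \<subseteq> Mor"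
    and "f \<in> C1 \<Longrightarrow> s f \<in> C0" "f \<in> C1 \<Longrightarrow> t f \<in> C0" "a \<in> C0 \<Longrightarrow> i a \<in> C1"
  using assms unfolding two_sub_vector_space_def by auto

lemma cbr1_identity_source: "omni_s (cbr1 d (X, 0) (omni_i k)) = cbr0 (gl_s X, 0) k"
  by (simp add: omni_s_def omni_i_def cbr1_def cbr0_def br1_def act1_def act0_def gl_s_def)

lemma cbr1_identity_target:
  assumes "fst k \<in> End0 d"
  shows "omni_t d (cbr1 d (X, 0) (omni_i k)) = cbr0 (gl_t d X, 0) k"
proof -
  obtain A0 A1 phi K0 K1 u where Xk: "X = ((A0, A1), phi)" "k = ((K0, K1), u)"
    by (metis prod.collapse)
  have "K0 ** d = d ** K1"
    using assms by (simp add: Xk End0_def)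
  then show ?thesis
    using assms unfolding Xk
    by (simp add: omni_t_def omni_i_def cbr1_def cbr0_def br1_def br0_def br01_def br11_def
        act1_def act0_def delta_def gl_t_def prod_eq_iff matrix_simps End0_commute
        algebra_simps)
qed

lemma normalizer_source:
  assumes L: "two_sub_vector_space (omni_ob d) (omni_mor d) omni_s (omni_t d) omni_i omni_comp L0 L1"
    and X: "X \<in> normalizer1 d L1"
  shows "gl_s X \<in> normalizer0 d L0"
proof -
  have "cbr0 (gl_s X, 0) k \<in> L0" if "k \<in> L0" for k
  proof -
    have "cbr1 d (X, 0) (omni_i k) \<in> L1"
      using X two_sub_vector_spaceD(7)[OF L that] by (simp add: normalizer1_def)
    from two_sub_vector_spaceD(5)[OF L this] show ?thesis
      by (simp add: cbr1_identity_source)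
  qed
  then show ?thesis
    using X by (auto simp: normalizer0_def normalizer1_def gl_s_def)
qed

lemma normalizer_target:
  assumes L: "two_sub_vector_space (omni_ob d) (omni_mor d) omni_s (omni_t d) omni_i omni_comp L0 L1"
    and X: "X \<in> normalizer1 d L1"
  shows "gl_t d X \<in> normalizer0 d L0"
proof -
  have "cbr0 (gl_t d X, 0) k \<in> L0" if k: "k \<in> L0" for k
  proof -
    have "fst k \<in> End0 d"
      using two_sub_vector_spaceD(3)[OF L] k by (auto simp: omni_ob_def)
    moreover have "cbr1 d (X, 0) (omni_i k) \<in> L1"
      using X two_sub_vector_spaceD(7)[OF L k] by (simp add: normalizer1_def)
    ultimately show ?thesis
      using two_sub_vector_spaceD(6)[OF L] by (simp add: cbr1_identity_target[symmetric])
  qed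
  moreover have "gl_t d X \<in> End0 d"
    using X subspace_add[OF End0_subspace _ delta_End0]
    by (auto simp: normalizer1_def gl_t_def)
  ultimately show ?thesis
    by (simp add: normalizer0_def)
qed

text \<open>Invariance of the pairing under an object A of gl(V): the pairing of {A, k} with f
  is a combination of pairings of k, f and of identity morphisms built from sources and
  targets.  If A normalizes L0 then all these morphisms lie in L1.\<close>

lemma pair1_cbr1_identity:
  assumes "A \<in> End0 d" "fst (fst k) \<in> End0 d"
  shows "pair1 d (cbr1 d ((A, 0), 0) k) f =
           pair1 d (omni_i (cbr0 (A, 0) (omni_s k))) f
           + (0, snd A *v snd (pair1 d k f)
                 - snd (pair1 d k (omni_i (cbr0 (A, 0) (omni_t d f))))
                 - snd A *v snd (pair1 d (omni_i (omni_s k)) f))"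
proof -
  obtain A0 A1 where A: "A = (A0, A1)" by fastforce
  obtain K0 K1 psi u m where k: "k = (((K0, K1), psi), (u, m))" by (metis prod.collapse)
  obtain B0 B1 w v p where f: "f = (((B0, B1), w), (v, p))" by (metis prod.collapse)
  show ?thesis
    using assms unfolding A k f
    by (simp add: pair1_def omni_t_def omni_s_def omni_i_def cbr1_def cbr0_def br1_def br0_def
        br01_def br11_def act1_def act0_def delta_def prod_eq_iff End0_commute matrix_simps
        algebra_simps)
qed

text \<open>For a Dirac structure, N_L on objects is mapped into N_L on morphisms by identities:
  {A, k} is orthogonal to L1 by the invariance identity, hence lies in L1 = L1^perp.\<close>

lemma normalizer_identity:
  assumes L: "dirac d L0 L1" and A: "A \<in> normalizer0 d L0"
  shows "gl_i A \<in> normalizer1 d L1"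
proof -
  have L01: "two_sub_vector_space (omni_ob d) (omni_mor d) omni_s (omni_t d) omni_i omni_comp L0 L1"
    and perp: "L1 = perp1 d L1"
    using L by (auto simp: dirac_def)
  have A_End0: "A \<in> End0 d" and A_L0: "\<And>a. a \<in> L0 \<Longrightarrow> cbr0 (A, 0) a \<in> L0"
    using A by (auto simp: normalizer0_def)
  have orth: "pair1 d e f = 0" if "e \<in> L1" "f \<in> L1" for e f
    using that perp by (auto simp: perp1_def)
  have "cbr1 d ((A, 0), 0) k \<in> L1" if k: "k \<in> L1" for k
  proof -
    have k_End0: "fst (fst k) \<in> End0 d"
      using two_sub_vector_spaceD(4)[OF L01] k by (auto simp: omni_mor_def)
    have "pair1 d (cbr1 d ((A, 0), 0) k) f = 0" if f: "f \<in> L1" for f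
    proof -
      have sk: "omni_s k \<in> L0" and tf: "omni_t d f \<in> L0"
        using two_sub_vector_spaceD(5,6)[OF L01] k f by auto
      note in_L1 = two_sub_vector_spaceD(7)[OF L01]
      show ?thesis
        unfolding pair1_cbr1_identity[OF A_End0 k_End0]
        by (simp add: orth k f in_L1 sk A_L0 tf zero_prod_def)
    qed
    moreover have "cbr1 d ((A, 0), 0) k \<in> omni_mor d"
      using br0_End0[OF A_End0 k_End0] by (simp add: omni_mor_def cbr1_def br1_def mem_Times_iff)
    ultimately show ?thesis
      by (subst perp) (simp add: perp1_def)
  qed
  then show ?thesis
    using A_End0 by (simp add: normalizer1_def gl_i_def)
qed

text \<open>In the strict 2-vector space gl(V) composition is determined by the linear structure:
  g after f equals f + g - id (t f).\<close>

lemma gl_comp_affine: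
  assumes "gl_t d f = gl_s g"
  shows "gl_comp g f = f + g - gl_i (gl_t d f)"
  using assms by (auto simp: gl_comp_def gl_i_def gl_s_def gl_t_def prod_eq_iff algebra_simps)

lemma normalizer_comp:
  assumes L: "dirac d L0 L1"
    and fg: "f \<in> normalizer1 d L1" "g \<in> normalizer1 d L1" "gl_t d f = gl_s g"
  shows "gl_comp g f \<in> normalizer1 d L1"
proof -
  have L01: "two_sub_vector_space (omni_ob d) (omni_mor d) omni_s (omni_t d) omni_i omni_comp L0 L1"
    using L by (simp add: dirac_def)
  have N1: "subspace (normalizer1 d L1)"
    by (rule normalizer1_subspace[OF two_sub_vector_spaceD(2)[OF L01]])
  have "f + g - gl_i (gl_t d f) \<in> normalizer1 d L1"
    using fg normalizer_identity[OF L normalizer_target[OF L01 fg(1)]]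
    by (intro subspace_diff[OF N1] subspace_add[OF N1])
  then show ?thesis
    by (simp add: gl_comp_affine[OF fg(3)])
qed

theorem mainTheorem11:
  fixes d :: "real^'m^'n"
    and L0 :: "('n,'m) omniob set" and L1 :: "('n,'m) omnimor set"
  assumes "dirac d L0 L1"
  shows "sub_lie2_gl d (normalizer0 d L0) (normalizer1 d L1)
         \<and> (\<forall>phi. (0, phi) \<in> normalizer1 d L1 \<longrightarrow> delta d phi \<in> normalizer0 d L0)"
proof -
  have L01: "two_sub_vector_space (omni_ob d) (omni_mor d) omni_s (omni_t d) omni_i omni_comp L0 L1"
    using assms by (simp add: dirac_def)
  note L0 = two_sub_vector_spaceD(1)[OF L01] and L1 = two_sub_vector_spaceD(2,4)[OF L01]
  have "normalizer0 d L0 \<subseteq> End0 d" "normalizer1 d L1 \<subseteq> End0 d \<times> UNIV"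
    by (auto simp: normalizer0_def normalizer1_def)
  then have "two_sub_vector_space (End0 d) (End0 d \<times> UNIV) gl_s (gl_t d) gl_i gl_comp
               (normalizer0 d L0) (normalizer1 d L1)"
    unfolding two_sub_vector_space_def
    using normalizer0_subspace[OF L0] normalizer1_subspace[OF L1(1)]
      normalizer_source[OF L01] normalizer_target[OF L01] normalizer_identity[OF assms]
      normalizer_comp[OF assms]
    by blast
  moreover have "delta d phi \<in> normalizer0 d L0" if "(0, phi) \<in> normalizer1 d L1" for phi
    using normalizer_target[OF L01 that] by (simp add: gl_t_def)
  ultimately show ?thesis
    unfolding sub_lie2_gl_def
    using normalizer0_br0[OF L0] normalizer1_br1[OF L1] by blast
qed

end
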